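(* Let $\mathbb{X}$ be a Banach space, $\varphi:\mathbb{X}\to\mathbb{R}\cup\{+\infty\}$ a proper lower semicontinuous function, $\mathbf{S}_\varphi:=\{x:\varphi(x)\le0\}$ and $\bar x\in\mathbf{S}_\varphi$. Assume ${\rm bd}(\mathbf{S}_\varphi)\subseteq\varphi^{-1}(0)$, $\varphi$ has the epigraphical Shapiro first order contact property at $\bar x$, and $\mathbf{S}_\varphi$ has the Shapiro first order contact property around $\bar x$. For $x\in\mathbb{X}$ put $S_x:=\{u\in\mathbb{X}:\varphi'_H(x;u)\le0\}$. (i) If there exist $\tau,\delta_0>0$ with $\mathbf{d}(x,\mathbf{S}_\varphi)\le\tau\max\{\varphi(x),0\}$ for all $x\in\mathbf{B}(\bar x,\delta_0)$, then there exists $\delta>0$ such that for every $x\in{\rm bd}(\mathbf{S}_\varphi)\cap\mathbf{B}(\bar x,\delta)$, $$\mathbf{d}(h,S_x)\le\tau\max\{\varphi'_H(x;h),0\}\quad\text{for all }h\in\mathbb{X}.$$ (ii) Suppose there is a neighborhood $U$ of $\bar x$ such that $\{h\in\mathbb{X}:\varphi'_H(x;h)=0\}\subseteq\mathbf{T}^{\mathbf B}(\mathbf{S}_\varphi,x)$ for all $x\in U\cap{\rm bd}(\mathbf{S}_\varphi)$. Then the inequality $\varphi(x)\le0$ has a local error bound at $\bar x$ if and only if there exist $\tau,\delta>0$ such that for every $x\in{\rm bd}(\mathbf{S}_\varphi)\cap\mathbf{B}(\bar x,\delta)$, $\mathbf{d}(h,S_x)\le\tau\max\{\varphi'_H(x;h),0\}$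 for all $h\in\mathbb{X}$.
   Context: $\mathbf{B}(a,\delta)$ is the open ball with center $a$ and radius $\delta$; ${\rm bd}$ denotes boundary; $\mathbf{d}(x,D):=\inf\{\|x-y\|:y\in D\}$. $\varphi'_H(x;h):=\liminf_{t\to0^+,\,h'\to h}\frac{\varphi(x+th')-\varphi(x)}{t}$. Bouligand tangent cone $\mathbf{T}^{\mathbf B}(C,c)$: all $v$ with $v_n\to v$, $t_n\downarrow0$, $c+t_nv_n\in C$. A closed set $C$ has the Shapiro first order contact property at $a\in C$ if for every $\varepsilon>0$ there is $\delta>0$ with $\mathbf{d}(x-u,\mathbf{T}^{\mathbf B}(C,u))\le\varepsilon\|x-u\|$ for all $x,u\in C\cap\mathbf{B}(a,\delta)$; around $\bar x$ means at every point of $C\cap U$ for some neighborhood $U$ of $\bar x$. Epigraphical Shapiro first order contact property at $\bar x$: ${\rm epi}(\varphi)\subseteq\mathbb{X}\times\mathbb{R}$ (norm $\|x\|+|\alpha|$) has the Shapiro first order contact property at $(\bar x,\varphi(\bar x))$. Local error bound at $\bar x$: there exist $\tau,\delta>0$ with $\mathbf{d}(x,\mathbf{S}_\varphi)\le\tau\max\{\varphi(x),0\}$ for all $x\in\mathbf{B}(\bar x,\delta)$. *)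

theory Defs
  imports "HOL-Analysis.Analysis"
begin

text \<open>Extended-real valued functions phi : X -> R \<union> {+\<infinity>} are modelled as
  functions into ereal that never take the value -\<infinity>.\<close>

definition proper_fun :: "('a \<Rightarrow> ereal) \<Rightarrow> bool" where
  "proper_fun f \<longleftrightarrow> (\<forall>x. f x \<noteq> -\<infinity>) \<and> (\<exists>x. f x \<noteq> \<infinity>)"

definition lsc_fun :: "('a::topological_space \<Rightarrow> ereal) \<Rightarrow> bool" where
  "lsc_fun f \<longleftrightarrow> (\<forall>x. f x \<le> Liminf (at x) f)"

text \<open>Distance to a set with the convention inf of the empty set = +\<infinity>.\<close>
definition edist_set :: "'a::metric_space \<Rightarrow> 'a set \<Rightarrow> ereal" where
  "edist_set x D = (INF y\<in>D. ereal (dist x y))"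

definition sublevel0 :: "('a \<Rightarrow> ereal) \<Rightarrow> 'a set" where
  "sublevel0 f = {x. f x \<le> 0}"

definition epi :: "('a \<Rightarrow> ereal) \<Rightarrow> ('a \<times> real) set" where
  "epi f = {(x, \<alpha>). f x \<le> ereal \<alpha>}"

definition hadamard_lower :: "('a::real_normed_vector \<Rightarrow> ereal) \<Rightarrow> 'a \<Rightarrow> 'a \<Rightarrow> ereal" where
  "hadamard_lower f x h =
     Liminf (at_right (0::real) \<times>\<^sub>F nhds h) (\<lambda>(t, h'). (f (x + t *\<^sub>R h') - f x) / ereal t)"

definition bouligand_cone :: "'a::real_normed_vector set \<Rightarrow> 'a \<Rightarrow> 'a set" where
  "bouligand_cone C c = {v. \<exists>vs ts. (vs \<longlonglongrightarrow> v) \<and> (ts \<longlonglongrightarrow> 0) \<and> (\<forall>n. ts n > 0)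
        \<and> (\<forall>n. c + ts n *\<^sub>R vs n \<in> C)}"

text \<open>Shapiro first order contact property of C at a, measured with a norm N
  (N is used for balls, for the distance and for the right-hand side;
  the tangent cone only depends on the (common) topology).\<close>
definition shapiro_at_N :: "('a::real_normed_vector \<Rightarrow> real) \<Rightarrow> 'a set \<Rightarrow> 'a \<Rightarrow> bool" where
  "shapiro_at_N N C a \<longleftrightarrow> (\<forall>\<epsilon>>0. \<exists>\<delta>>0. \<forall>x\<in>C. \<forall>u\<in>C. N (x - a) < \<delta> \<longrightarrow> N (u - a) < \<delta> \<longrightarrow>
      (INF v\<in>bouligand_cone C u. ereal (N (x - u - v))) \<le> ereal (\<epsilon> * N (x - u)))"

definition shapiro_at :: "'a::real_normed_vector set \<Rightarrow> 'a \<Rightarrow> bool" where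
  "shapiro_at C a \<longleftrightarrow> shapiro_at_N norm C a"

definition shapiro_around :: "'a::real_normed_vector set \<Rightarrow> 'a \<Rightarrow> bool" where
  "shapiro_around C a \<longleftrightarrow> (\<exists>U. open U \<and> a \<in> U \<and> (\<forall>u\<in>C \<inter> U. shapiro_at C u))"

definition epi_shapiro_at :: "('a::real_normed_vector \<Rightarrow> ereal) \<Rightarrow> 'a \<Rightarrow> bool" where
  "epi_shapiro_at f a \<longleftrightarrow>
     shapiro_at_N (\<lambda>(x, \<alpha>). norm x + \<bar>\<alpha>\<bar>) (epi f) (a, real_of_ereal (f a))"

definition local_error_bound :: "('a::real_normed_vector \<Rightarrow> ereal) \<Rightarrow> 'a \<Rightarrow> bool" where
  "local_error_bound f a \<longleftrightarrow> (\<exists>\<tau>>0. \<exists>\<delta>>0. \<forall>x\<in>ball a \<delta>.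
      edist_set x (sublevel0 f) \<le> ereal \<tau> * max (f x) 0)"

end

theory Submission
  imports Defs
begin

text \<open>
  (i) If \<open>\<phi>'\<^sub>H(x; h) < c\<close> at a boundary point \<open>x\<close>, there are arbitrarily small \<open>t\<close> and \<open>h' \<approx> h\<close>
  with \<open>\<phi>(x + t h') < c t\<close>. The error bound yields a point \<open>s \<in> S\<^sub>\<phi>\<close> with
  \<open>\<parallel>x + t h' - s\<parallel> < \<tau> c t\<close>, and the Shapiro property of \<open>S\<^sub>\<phi>\<close> at \<open>x\<close> approximates \<open>s - x\<close> by a
  tangent vector \<open>v\<close> up to \<open>o(t)\<close>. Since tangent directions of \<open>S\<^sub>\<phi>\<close> have nonpositive
  derivative, \<open>v / t \<in> S\<^sub>x\<close> lies within \<open>\<tau> c + o(1)\<close> of \<open>h\<close>.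

  (ii) For \<open>z\<close> near \<open>xbar\<close> with \<open>\<phi>(z) = a > 0\<close>, Ekeland's principle applied to \<open>dist z\<close> on \<open>S\<^sub>\<phi>\<close>
  gives a boundary point \<open>u\<close> with \<open>\<parallel>z - u\<parallel> \<le> \<parallel>z - u - v\<parallel> + \<parallel>v\<parallel>/4\<close> for every tangent
  vector \<open>v\<close> of \<open>S\<^sub>\<phi>\<close> at \<open>u\<close>. The epigraphical Shapiro property approximates
  \<open>(z - u, a)\<close> by a tangent \<open>(w, \<beta>)\<close> of the epigraph, so \<open>\<phi>'\<^sub>H(u; w) \<le> \<beta>\<close>; the derivative
  error bound moves \<open>w\<close> into \<open>S\<^sub>u\<close>, whose elements are tangent to \<open>S\<^sub>\<phi>\<close> (for derivative \<open>0\<close>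
  by hypothesis, for negative derivative always). Combining the estimates with the
  Ekeland inequality gives \<open>\<parallel>z - u\<parallel> < (5 + 5\<tau>) a\<close>.
\<close>

lemma edist_set_le_dist: "y \<in> D \<Longrightarrow> edist_set x D \<le> ereal (dist x y)"
  unfolding edist_set_def by (rule INF_lower)

lemma edist_set_lessD: "edist_set x D < ereal c \<Longrightarrow> \<exists>y\<in>D. dist x y < c"
  unfolding edist_set_def by (auto simp: INF_less_iff)

lemma edist_set_le_error_bound:
  assumes "x \<in> D" "\<tau> \<ge> 0"
  shows "edist_set x D \<le> ereal \<tau> * max a 0"
proof -
  have "edist_set x D \<le> ereal (dist x x)" using assms(1) by (rule edist_set_le_dist)
  also have "\<dots> \<le> ereal \<tau> * max a 0" using assms(2) by (simp add: zero_ereal_def[symmetric])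
  finally show ?thesis .
qed

section \<open>Ekeland points of a distance function\<close>

definition ekeland_point :: "real \<Rightarrow> ('a::metric_space \<Rightarrow> real) \<Rightarrow> 'a set \<Rightarrow> 'a \<Rightarrow> bool" where
  "ekeland_point \<kappa> f S u \<longleftrightarrow> u \<in> S \<and> (\<forall>y\<in>S. f u \<le> f y + \<kappa> * dist y u)"

definition ekeland_set :: "real \<Rightarrow> ('a::metric_space \<Rightarrow> real) \<Rightarrow> 'a set \<Rightarrow> 'a \<Rightarrow> 'a set" where
  "ekeland_set \<kappa> f S y = {x\<in>S. f x + \<kappa> * dist x y \<le> f y}"

lemma ekeland_set_refl: "y \<in> S \<Longrightarrow> y \<in> ekeland_set \<kappa> f S y"
  by (simp add: ekeland_set_def)

lemma ekeland_set_subset: "ekeland_set \<kappa> f S y \<subseteq> S"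
  by (auto simp: ekeland_set_def)

lemma ekeland_set_trans:
  assumes "x \<in> ekeland_set \<kappa> f S y" "\<kappa> \<ge> 0"
  shows "ekeland_set \<kappa> f S x \<subseteq> ekeland_set \<kappa> f S y"
proof
  fix w assume "w \<in> ekeland_set \<kappa> f S x"
  then have w: "w \<in> S" "f w + \<kappa> * dist w x \<le> f x" by (auto simp: ekeland_set_def)
  have x: "f x + \<kappa> * dist x y \<le> f y" using assms(1) by (auto simp: ekeland_set_def)
  have "\<kappa> * dist w y \<le> \<kappa> * (dist w x + dist x y)"
    using assms(2) dist_triangle[of w y x] by (intro mult_left_mono) auto
  then show "w \<in> ekeland_set \<kappa> f S y" using w x by (auto simp: ekeland_set_def distrib_left)
qed

lemma closed_ekeland_set:
  assumes "closed S" "continuous_on S f"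
  shows "closed (ekeland_set \<kappa> f S y)"
  unfolding ekeland_set_def using assms by (intro continuous_on_closed_Collect_le continuous_intros) auto

lemma ekeland_variational_principle:
  fixes S :: "'a::complete_space set" and f :: "'a \<Rightarrow> real"
  assumes S: "closed S" "y0 \<in> S" and f: "continuous_on S f" "bdd_below (f ` S)" and k: "\<kappa> > 0"
  shows "\<exists>u. ekeland_point \<kappa> f S u \<and> f u \<le> f y0"
proof -
  let ?A = "ekeland_set \<kappa> f S"
  have ex: "\<exists>x. x \<in> ?A y \<and> f x < Inf (f ` ?A y) + (1/2)^n" if "y \<in> S" for n y
    using cInf_lessD[of "f ` ?A y" "Inf (f ` ?A y) + (1/2)^n"] ekeland_set_refl[OF that] by force
  define nxt where "nxt n y = (SOME x. x \<in> ?A y \<and> f x < Inf (f ` ?A y) + (1/2)^n)" for n y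
  have nxt: "nxt n y \<in> ?A y \<and> f (nxt n y) < Inf (f ` ?A y) + (1/2)^n" if "y \<in> S" for n y
    unfolding nxt_def using ex[OF that] by (rule someI_ex)
  \<comment> \<open>Each step almost minimises \<open>f\<close> over the previous set, which forces the nested sets
     \<open>?A (ys n)\<close> to shrink.\<close>
  define ys where "ys = rec_nat y0 nxt"
  have ys_S: "ys n \<in> S" for n
  proof (induction n)
    case (Suc n)
    have "nxt n (ys n) \<in> S" using nxt[OF Suc] ekeland_set_subset by blast
    then show ?case by (simp add: ys_def)
  qed (simp add: ys_def S(2))
  have ys_A: "?A (ys (Suc n)) \<subseteq> ?A (ys n)" for n
    using ekeland_set_trans[OF conjunct1[OF nxt[OF ys_S]]] k by (simp add: ys_def)
  have nested: "?A (ys n) \<subseteq> ?A (ys m)" if "m \<le> n" for m n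
    using that by (induction n rule: dec_induct) (use ys_A in auto)
  have small: "dist w (ys (Suc n)) < (1/2)^n / \<kappa>" if "w \<in> ?A (ys (Suc n))" for w n
  proof -
    have "Inf (f ` ?A (ys n)) \<le> f w"
      using that ys_A bdd_below_mono[OF f(2) image_mono[OF ekeland_set_subset]] by (intro cInf_lower) auto
    moreover have "f (ys (Suc n)) < Inf (f ` ?A (ys n)) + (1/2)^n" using nxt[OF ys_S] by (simp add: ys_def)
    moreover have "f w + \<kappa> * dist w (ys (Suc n)) \<le> f (ys (Suc n))" using that by (simp add: ekeland_set_def)
    ultimately have "\<kappa> * dist w (ys (Suc n)) < (1/2)^n" by linarith
    then show ?thesis using k by (simp add: field_simps)
  qed
  have diam: "\<exists>n. \<forall>p\<in>?A (ys n). \<forall>q\<in>?A (ys n). dist p q < e" if e: "e > 0" for e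
  proof -
    obtain N where "(1/2::real)^N < e * \<kappa> / 2"
      using real_arch_pow_inv[of "e * \<kappa> / 2" "1/2"] k e by auto
    then have N: "(1/2::real)^N / \<kappa> < e / 2" using k by (simp add: field_simps)
    have "dist p q < e" if "p \<in> ?A (ys (Suc N))" "q \<in> ?A (ys (Suc N))" for p q
      using small[OF that(1)] small[OF that(2)] dist_triangle[of p q "ys (Suc N)"]
        dist_commute[of q "ys (Suc N)"] N by linarith
    then show ?thesis by blast
  qed
  obtain u where u: "\<And>n. u \<in> ?A (ys n)"
    using decreasing_closed_nest[of "\<lambda>n. ?A (ys n)"] closed_ekeland_set[OF S(1) f(1)]
      ekeland_set_refl[OF ys_S] nested diam by blast
  have "f u \<le> f y + \<kappa> * dist y u" if y: "y \<in> S" for y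
  proof (rule ccontr)
    assume "\<not> f u \<le> f y + \<kappa> * dist y u"
    then have "y \<in> ?A u" using y by (auto simp: ekeland_set_def dist_commute)
    then have "y \<in> ?A (ys n)" for n using ekeland_set_trans[OF u] k by auto
    then have "y = u" using u diam by (metis dist_self less_irrefl zero_less_dist_iff)
    then show False using \<open>\<not> f u \<le> f y + \<kappa> * dist y u\<close> by simp
  qed
  moreover have "f u \<le> f y0"
    using u[of 0] k by (simp add: ys_def ekeland_set_def) (smt (verit) mult_nonneg_nonneg zero_le_dist)
  ultimately show ?thesis using u[of 0] ekeland_set_subset unfolding ekeland_point_def by blast
qed

lemma ekeland_point_dist_not_interior:
  fixes z :: "'a::real_normed_vector"
  assumes ek: "ekeland_point \<kappa> (dist z) S u" and k: "\<kappa> < 1" and z: "z \<notin> S"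
  shows "u \<notin> interior S"
proof
  assume "u \<in> interior S"
  then obtain e where e: "e > 0" "ball u e \<subseteq> S" using mem_interior by blast
  define r where "r = dist z u"
  have r: "r > 0" using ek z by (auto simp: r_def ekeland_point_def)
  define s where "s = min (1/2) (e / (2 * r))"
  have s: "s > 0" "s \<le> 1/2" "s * r < e" using e r by (auto simp: s_def min_def field_simps)
  define y where "y = u + s *\<^sub>R (z - u)"
  have yu: "dist y u = s * r" using s by (simp add: y_def r_def dist_norm norm_minus_commute)
  have "y \<in> S" using e(2) yu s(3) by (auto simp: dist_commute)
  then have "r \<le> dist z y + \<kappa> * (s * r)" using ek yu by (auto simp: ekeland_point_def r_def)
  moreover have "z - y = (1 - s) *\<^sub>R (z - u)" by (simp add: y_def algebra_simps)
  then have "dist z y = (1 - s) * r" using s by (simp add: dist_norm r_def)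
  ultimately have "0 \<ge> s * r * (1 - \<kappa>)" by (simp add: algebra_simps)
  moreover have "s * r * (1 - \<kappa>) > 0" using s r k by simp
  ultimately show False by simp
qed

lemma ekeland_point_dist_tangent:
  fixes z u v :: "'a::real_normed_vector"
  assumes ek: "ekeland_point \<kappa> (dist z) S u" and k: "\<kappa> \<ge> 0"
    and v: "v \<in> bouligand_cone S u"
  shows "norm (z - u) \<le> norm (z - u - v) + \<kappa> * norm v"
proof -
  obtain vs ts where h: "vs \<longlonglongrightarrow> v" "ts \<longlonglongrightarrow> 0" "\<forall>n. ts n > 0" "\<forall>n. u + ts n *\<^sub>R vs n \<in> S"
    using v unfolding bouligand_cone_def by blast
  have "norm (z - u) \<le> norm (z - u - v) + norm (vs n - v) + \<kappa> * norm (vs n)"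
    if t: "ts n < 1" for n
  proof -
    define t where "t = ts n"
    have t0: "t > 0" "t < 1" using h(3) t t_def by auto
    have "dist z u \<le> dist z (u + t *\<^sub>R vs n) + \<kappa> * dist (u + t *\<^sub>R vs n) u"
      using ek h(4) t_def by (auto simp: ekeland_point_def)
    then have 1: "norm (z - u) \<le> norm (z - u - t *\<^sub>R vs n) + t * (\<kappa> * norm (vs n))"
      using t0 by (simp add: dist_norm algebra_simps)
    have split: "z - u - t *\<^sub>R vs n = (1 - t) *\<^sub>R (z - u) + t *\<^sub>R (z - u - v) + t *\<^sub>R (v - vs n)"
      by (simp add: algebra_simps)
    have "norm (z - u - t *\<^sub>R vs n)
        \<le> norm ((1 - t) *\<^sub>R (z - u)) + norm (t *\<^sub>R (z - u - v)) + norm (t *\<^sub>R (v - vs n))"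
      unfolding split by (rule norm_triangle_le[OF add_right_mono[OF norm_triangle_ineq]])
    then have "norm (z - u - t *\<^sub>R vs n) \<le> (1 - t) * norm (z - u) + t * norm (z - u - v) + t * norm (vs n - v)"
      using t0 by (simp add: norm_minus_commute)
    with 1 have "t * norm (z - u) \<le> t * (norm (z - u - v) + norm (vs n - v) + \<kappa> * norm (vs n))"
      by (simp add: algebra_simps)
    then show ?thesis using t0 by simp
  qed
  moreover have "eventually (\<lambda>n. ts n < 1) sequentially" using h(2) by (rule order_tendstoD) simp
  ultimately have "eventually (\<lambda>n. norm (z - u) \<le> norm (z - u - v) + norm (vs n - v) + \<kappa> * norm (vs n)) sequentially"
    by (auto elim: eventually_mono)
  moreover have "(\<lambda>n. norm (z - u - v) + norm (vs n - v) + \<kappa> * norm (vs n)) \<longlonglongrightarrow> norm (z - u - v) + norm (v - v) + \<kappa> * norm v"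
    using h(1) by (intro tendsto_intros)
  ultimately show ?thesis using tendsto_le[OF trivial_limit_sequentially _ tendsto_const] by fastforce
qed

section \<open>Tangent cones and the lower Hadamard derivative\<close>

lemma bouligand_cone_scaleR:
  assumes "v \<in> bouligand_cone C c" "r > 0"
  shows "r *\<^sub>R v \<in> bouligand_cone C c"
proof -
  from assms(1) obtain vs ts where h: "vs \<longlonglongrightarrow> v" "ts \<longlonglongrightarrow> 0" "\<forall>n. ts n > 0" "\<forall>n. c + ts n *\<^sub>R vs n \<in> C"
    unfolding bouligand_cone_def by blast
  have "(\<lambda>n. r *\<^sub>R vs n) \<longlonglongrightarrow> r *\<^sub>R v" using h(1) by (intro tendsto_intros)
  moreover have "(\<lambda>n. ts n / r) \<longlonglongrightarrow> 0" using h(2) tendsto_divide_zero by blast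
  moreover have "\<forall>n. ts n / r > 0" using h(3) assms(2) by simp
  moreover have "\<forall>n. c + (ts n / r) *\<^sub>R (r *\<^sub>R vs n) \<in> C" using h(4) assms(2) by simp
  ultimately show ?thesis unfolding bouligand_cone_def by blast
qed

lemma Liminf_le_of_sequence:
  fixes f :: "'b \<Rightarrow> ereal"
  assumes "filterlim g F sequentially" "\<And>n. f (g n) \<le> ereal (b n)" "b \<longlonglongrightarrow> \<beta>"
  shows "Liminf F f \<le> ereal \<beta>"
proof (rule ccontr)
  assume "\<not> ?thesis"
  then have "ereal \<beta> < Liminf F f" by simp
  then obtain z where z: "ereal \<beta> < ereal z" "ereal z < Liminf F f"
    using ereal_dense2 by blast
  have "eventually (\<lambda>x. ereal z < f x) F"
    using le_Liminf_iff[THEN iffD1, OF order_refl] z(2) by blast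
  then have "eventually (\<lambda>n. ereal z < f (g n)) sequentially"
    using eventually_compose_filterlim assms(1) by blast
  moreover have "eventually (\<lambda>n. b n < z) sequentially"
    using order_tendstoD(2)[OF assms(3)] z(1) by simp
  ultimately have "eventually (\<lambda>n. False) sequentially"
  proof eventually_elim
    case (elim n)
    have "ereal z < ereal (b n)" using elim(1) assms(2)[of n] by (rule less_le_trans)
    with elim(2) show False by simp
  qed
  then show False by simp
qed

lemma filterlim_Pair_at_right_nhds:
  assumes "vs \<longlonglongrightarrow> v" "ts \<longlonglongrightarrow> 0" "\<forall>n. ts n > (0::real)"
  shows "filterlim (\<lambda>n. (ts n, vs n)) (at_right 0 \<times>\<^sub>F nhds v) sequentially"
  using filterlim_Pair tendsto_imp_filterlim_at_right[OF assms(2)] assms(1,3) by simp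

lemma hadamard_lower_le_of_sequence:
  fixes \<phi> :: "'a::real_normed_vector \<Rightarrow> ereal"
  assumes "\<phi> u = 0" "vs \<longlonglongrightarrow> w" "ts \<longlonglongrightarrow> 0" "\<forall>n. ts n > 0" "bs \<longlonglongrightarrow> \<beta>"
    and "\<And>n. \<phi> (u + ts n *\<^sub>R vs n) \<le> ereal (ts n * bs n)"
  shows "hadamard_lower \<phi> u w \<le> ereal \<beta>"
  unfolding hadamard_lower_def
proof (rule Liminf_le_of_sequence[where g="\<lambda>n. (ts n, vs n)"])
  show "filterlim (\<lambda>n. (ts n, vs n)) (at_right 0 \<times>\<^sub>F nhds w) sequentially"
    using filterlim_Pair_at_right_nhds assms(2-4) by blast
  show "(\<lambda>(t, h'). (\<phi> (u + t *\<^sub>R h') - \<phi> u) / ereal t) (ts n, vs n) \<le> ereal (bs n)" for n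
    using assms(1,4) assms(6)[of n] by (simp add: ereal_divide_le_pos)
qed (fact assms(5))

lemma hadamard_lower_nonpos_of_tangent:
  fixes \<phi> :: "'a::real_normed_vector \<Rightarrow> ereal"
  assumes "\<phi> u = 0" "v \<in> bouligand_cone (sublevel0 \<phi>) u"
  shows "hadamard_lower \<phi> u v \<le> 0"
proof -
  obtain vs ts where h: "vs \<longlonglongrightarrow> v" "ts \<longlonglongrightarrow> 0" "\<forall>n. ts n > 0" "\<forall>n. u + ts n *\<^sub>R vs n \<in> sublevel0 \<phi>"
    using assms(2) unfolding bouligand_cone_def by blast
  have "hadamard_lower \<phi> u v \<le> ereal 0"
    by (rule hadamard_lower_le_of_sequence[where ts=ts and vs=vs and bs="\<lambda>_. 0"])
      (use assms(1) h in \<open>auto simp: sublevel0_def zero_ereal_def\<close>)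
  then show ?thesis by (simp add: zero_ereal_def)
qed

lemma hadamard_lower_le_of_epi_tangent:
  fixes \<phi> :: "'a::real_normed_vector \<Rightarrow> ereal"
  assumes "\<phi> u = 0" "(w, \<beta>) \<in> bouligand_cone (epi \<phi>) (u, 0)"
  shows "hadamard_lower \<phi> u w \<le> ereal \<beta>"
proof -
  obtain ps ts where h: "ps \<longlonglongrightarrow> (w, \<beta>)" "ts \<longlonglongrightarrow> 0" "\<forall>n. ts n > 0" "\<forall>n. (u, 0) + ts n *\<^sub>R ps n \<in> epi \<phi>"
    using assms(2) unfolding bouligand_cone_def by blast
  show ?thesis
  proof (rule hadamard_lower_le_of_sequence[where ts=ts and vs="\<lambda>n. fst (ps n)" and bs="\<lambda>n. snd (ps n)"])
    show "(\<lambda>n. fst (ps n)) \<longlonglongrightarrow> w" "(\<lambda>n. snd (ps n)) \<longlonglongrightarrow> \<beta>"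
      using tendsto_fst[OF h(1)] tendsto_snd[OF h(1)] by simp_all
    show "\<phi> (u + ts n *\<^sub>R fst (ps n)) \<le> ereal (ts n * snd (ps n))" for n
      using h(4)[rule_format, of n] by (cases "ps n") (auto simp: epi_def)
  qed (use assms(1) h(2,3) in auto)
qed

lemma hadamard_lower_lessD:
  fixes \<phi> :: "'a::real_normed_vector \<Rightarrow> ereal"
  assumes "\<phi> x = 0" "hadamard_lower \<phi> x h < ereal c" "\<eta>1 > 0" "\<eta>2 > 0"
  shows "\<exists>t h'. 0 < t \<and> t < \<eta>1 \<and> dist h' h < \<eta>2 \<and> \<phi> (x + t *\<^sub>R h') < ereal (c * t)"
proof -
  let ?F = "at_right (0::real) \<times>\<^sub>F nhds h"
  let ?q = "\<lambda>(t, h'). (\<phi> (x + t *\<^sub>R h') - \<phi> x) / ereal t"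
  have "\<not> eventually (\<lambda>p. ereal c \<le> ?q p) ?F"
    using assms(2) Liminf_bounded[of "ereal c" ?q ?F] unfolding hadamard_lower_def by fastforce
  then have fr: "frequently (\<lambda>p. ?q p < ereal c) ?F"
    by (simp add: frequently_def not_less)
  have "eventually (\<lambda>p. fst p \<in> {0<..<\<eta>1} \<and> dist (snd p) h < \<eta>2) ?F"
    unfolding eventually_prod_filter
    using eventually_at_right_real[OF assms(3)] assms(4)
    by (intro exI[of _ "\<lambda>t. t \<in> {0<..<\<eta>1}"] exI[of _ "\<lambda>h'. dist h' h < \<eta>2"])
      (auto simp: eventually_nhds_metric)
  from frequently_ex[OF frequently_eventually_conj[OF fr this]]
  obtain t h' where "0 < t" "t < \<eta>1" "dist h' h < \<eta>2" "\<phi> (x + t *\<^sub>R h') / ereal t < ereal c"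
    using assms(1) by auto
  moreover have "\<phi> (x + t *\<^sub>R h') < ereal (c * t)"
    using \<open>0 < t\<close> \<open>\<phi> (x + t *\<^sub>R h') / ereal t < ereal c\<close>
    by (cases "\<phi> (x + t *\<^sub>R h')") (auto simp: field_simps)
  ultimately show ?thesis by blast
qed

lemma tangent_of_hadamard_lower_neg:
  fixes \<phi> :: "'a::real_normed_vector \<Rightarrow> ereal"
  assumes "\<phi> u = 0" "hadamard_lower \<phi> u w < 0"
  shows "w \<in> bouligand_cone (sublevel0 \<phi>) u"
proof -
  have "\<exists>t h'. 0 < t \<and> t < 1 / real (Suc n) \<and> dist h' w < 1 / real (Suc n) \<and> \<phi> (u + t *\<^sub>R h') < ereal (0 * t)"
    for n using hadamard_lower_lessD[of \<phi> u w 0] assms by (simp add: zero_ereal_def)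
  then obtain ts vs where g: "\<And>n. 0 < ts n \<and> ts n < 1 / real (Suc n) \<and> dist (vs n) w < 1 / real (Suc n)
      \<and> \<phi> (u + ts n *\<^sub>R vs n) < 0"
    by (simp add: zero_ereal_def) metis
  have "(\<lambda>n. vs n - w) \<longlonglongrightarrow> 0" using g by (intro LIMSEQ_norm_0) (simp add: dist_norm)
  then have "vs \<longlonglongrightarrow> w" by (rule LIM_zero_cancel)
  moreover have "ts \<longlonglongrightarrow> 0" using g by (intro LIMSEQ_norm_0) (simp add: abs_of_pos)
  moreover have "\<forall>n. u + ts n *\<^sub>R vs n \<in> sublevel0 \<phi>"
    using g by (auto simp: sublevel0_def less_imp_le)
  ultimately show ?thesis using g unfolding bouligand_cone_def by blast
qed

lemma closed_sublevel0:
  fixes \<phi> :: "'a::metric_space \<Rightarrow> ereal"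
  assumes "lsc_fun \<phi>" shows "closed (sublevel0 \<phi>)"
  unfolding closed_def open_dist
proof (intro ballI)
  fix x assume "x \<in> - sublevel0 \<phi>"
  then have "0 < \<phi> x" by (auto simp: sublevel0_def)
  also have "\<phi> x \<le> Liminf (at x) \<phi>" using assms lsc_fun_def by auto
  finally have "eventually (\<lambda>y. 0 < \<phi> y) (at x)"
    using le_Liminf_iff[THEN iffD1, OF order_refl] by auto
  then obtain d where "d > 0" "\<forall>y. y \<noteq> x \<and> dist y x < d \<longrightarrow> 0 < \<phi> y"
    unfolding eventually_at by auto
  then show "\<exists>e>0. \<forall>y. dist y x < e \<longrightarrow> y \<in> - sublevel0 \<phi>"
    using \<open>0 < \<phi> x\<close> by (intro exI[of _ d]) (auto simp: sublevel0_def not_le)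
qed

section \<open>Part (i): from an error bound to derivative error bounds\<close>

lemma ereal_mult_max_less:
  assumes "a < ereal b" "b > 0" "\<tau> > 0"
  shows "ereal \<tau> * max a 0 < ereal (\<tau> * b)"
proof -
  have "max a 0 < ereal b" "0 \<le> max a 0" using assms(1,2) by auto
  then obtain r where "max a 0 = ereal r" "r < b" by (cases "max a 0") auto
  then show ?thesis using assms(3) by simp
qed

lemma edist_hadamard_sublevel_less:
  fixes \<phi> :: "'a::real_normed_vector \<Rightarrow> ereal"
  assumes x0: "\<phi> x = 0" and sh: "shapiro_at (sublevel0 \<phi>) x" and tau: "\<tau> > 0" and rho: "\<rho> > 0"
    and eb: "\<forall>y\<in>ball x \<rho>. edist_set y (sublevel0 \<phi>) \<le> ereal \<tau> * max (\<phi> y) 0"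
    and c: "c > 0" "hadamard_lower \<phi> x h < ereal c" and e: "e > 0"
  shows "edist_set h {u. hadamard_lower \<phi> x u \<le> 0} < ereal (\<tau> * c + e)"
proof -
  let ?S = "sublevel0 \<phi>"
  \<comment> \<open>Both \<open>x + t h'\<close> and its near point \<open>s \<in> S\<^sub>\<phi>\<close> stay within \<open>t K\<close> of \<open>x\<close>, so \<open>t < min \<rho> ds / K\<close>
     keeps them in the range of the error bound and of the Shapiro estimate.\<close>
  define K where "K = norm h + 2 + \<tau> * c"
  have tc: "\<tau> * c > 0" using tau c by simp
  then have K: "K > 0" using norm_ge_zero[of h] unfolding K_def by linarith
  define es where "es = e / (2 * K)"
  have es: "es > 0" "es * K = e / 2" using e K by (simp_all add: es_def)
  obtain ds where ds: "ds > 0" and shx: "\<forall>y\<in>?S. \<forall>u\<in>?S. norm (y - x) < ds \<longrightarrow> norm (u - x) < ds \<longrightarrow>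
      (INF v\<in>bouligand_cone ?S u. ereal (norm (y - u - v))) \<le> ereal (es * norm (y - u))"
    using sh es unfolding shapiro_at_def shapiro_at_N_def by blast
  obtain t h' where t: "0 < t" "t < min \<rho> ds / K" and h': "dist h' h < min 1 (e/2)"
    and phiy: "\<phi> (x + t *\<^sub>R h') < ereal (c * t)"
    using hadamard_lower_lessD[of \<phi> x h c "min \<rho> ds / K" "min 1 (e/2)"] x0 c(2) rho ds K e
    by auto
  define y where "y = x + t *\<^sub>R h'"
  have tK: "t * K < min \<rho> ds" using t K by (simp add: field_simps)
  have "norm h' < norm h + 1" using norm_triangle_ineq[of h "h' - h"] h' by (simp add: dist_norm)
  then have yx: "norm (y - x) \<le> t * (norm h + 1)" using t by (simp add: y_def less_imp_le)
  also have "\<dots> \<le> t * K" using t tc by (intro mult_left_mono) (auto simp: K_def)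
  also have "\<dots> < min \<rho> ds" by (fact tK)
  finally have "y \<in> ball x \<rho>" by (simp add: dist_norm norm_minus_commute)
  then have "edist_set y ?S < ereal (\<tau> * (c * t))"
    using eb ereal_mult_max_less[of "\<phi> y" "c * t" \<tau>] phiy tau c t by (fastforce simp: y_def)
  then obtain s where s: "s \<in> ?S" "norm (y - s) < \<tau> * c * t"
    by (auto dest!: edist_set_lessD simp: dist_norm mult.assoc)
  have "norm (s - x) \<le> norm (y - x) + norm (y - s)"
    using norm_triangle_ineq[of "y - x" "s - y"] by (simp add: norm_minus_commute)
  then have sx: "norm (s - x) < t * (norm h + 1 + \<tau> * c)" using yx s(2) by (simp add: algebra_simps)
  have "t * (norm h + 1 + \<tau> * c) \<le> t * K" using t by (simp add: K_def)
  then have "norm (s - x) < ds" using sx tK by linarith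
  then have "(INF v\<in>bouligand_cone ?S x. ereal (norm (s - x - v))) \<le> ereal (es * norm (s - x))"
    using shx s(1) x0 ds by (simp add: sublevel0_def)
  also have "\<dots> < ereal (es * norm (s - x) + es * t)" using es t by simp
  finally obtain v where v: "v \<in> bouligand_cone ?S x" "norm (s - x - v) < es * (norm (s - x) + t)"
    by (auto simp: INF_less_iff distrib_left)
  have "es * (norm (s - x) + t) \<le> es * (t * K)"
    using sx es(1) by (intro mult_left_mono) (auto simp: K_def algebra_simps)
  also have "es * (t * K) = t * (e / 2)" using es(2) by (simp add: algebra_simps)
  finally have sv: "norm (s - x - v) < t * (e / 2)" using v(2) by linarith
  define v' where "v' = (1 / t) *\<^sub>R v"
  have "v' \<in> bouligand_cone ?S x" unfolding v'_def using bouligand_cone_scaleR[OF v(1)] t by simp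
  then have v'S: "v' \<in> {u. hadamard_lower \<phi> x u \<le> 0}" using hadamard_lower_nonpos_of_tangent[of \<phi> x v'] x0 by blast
  have split: "t *\<^sub>R (h - v') = t *\<^sub>R (h - h') + (y - s) + (s - x - v)"
    using t by (simp add: v'_def y_def algebra_simps)
  have "norm (t *\<^sub>R (h - v')) \<le> norm (t *\<^sub>R (h - h')) + norm (y - s) + norm (s - x - v)"
    unfolding split by (rule norm_triangle_le[OF add_right_mono[OF norm_triangle_ineq]])
  then have "t * norm (h - v') \<le> t * norm (h - h') + norm (y - s) + norm (s - x - v)"
    using t by simp
  moreover have "t * norm (h - h') \<le> t * (e / 2)"
    using h' t by (intro mult_left_mono) (auto simp: dist_norm norm_minus_commute)
  ultimately have "t * norm (h - v') < t * (\<tau> * c + e)" using s(2) sv by (simp add: algebra_simps)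
  then have "norm (h - v') < \<tau> * c + e" using t by simp
  then show ?thesis
    using edist_set_le_dist[OF v'S, of h] by (simp add: dist_norm le_less_trans)
qed

lemma derivative_error_bound_of_error_bound:
  fixes \<phi> :: "'a::real_normed_vector \<Rightarrow> ereal"
  assumes fr: "frontier (sublevel0 \<phi>) \<subseteq> \<phi> -` {0}"
    and sh: "shapiro_around (sublevel0 \<phi>) xbar"
    and tau: "\<tau> > 0" and d0: "\<delta>0 > 0"
    and eb: "\<forall>x\<in>ball xbar \<delta>0. edist_set x (sublevel0 \<phi>) \<le> ereal \<tau> * max (\<phi> x) 0"
  shows "\<exists>\<delta>>0. \<forall>x\<in>frontier (sublevel0 \<phi>) \<inter> ball xbar \<delta>. \<forall>h.
            edist_set h {u. hadamard_lower \<phi> x u \<le> 0} \<le> ereal \<tau> * max (hadamard_lower \<phi> x h) 0"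
proof -
  obtain U where U: "open U" "xbar \<in> U" "\<forall>u\<in>sublevel0 \<phi> \<inter> U. shapiro_at (sublevel0 \<phi>) u"
    using sh unfolding shapiro_around_def by blast
  obtain dU where dU: "dU > 0" "ball xbar dU \<subseteq> U" using U(1,2) open_contains_ball by blast
  have "edist_set h {u. hadamard_lower \<phi> x u \<le> 0} \<le> ereal \<tau> * max (hadamard_lower \<phi> x h) 0"
    if x: "x \<in> frontier (sublevel0 \<phi>)" "x \<in> ball xbar (min \<delta>0 dU)" for x h
  proof -
    have x0: "\<phi> x = 0" using fr x(1) by auto
    have shx: "shapiro_at (sublevel0 \<phi>) x" using U(3) x0 x(2) dU(2) by (auto simp: sublevel0_def)
    have "x \<in> ball xbar \<delta>0" using x(2) by simp
    then obtain \<rho> where rho: "\<rho> > 0" "ball x \<rho> \<subseteq> ball xbar \<delta>0"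
      using open_contains_ball open_ball by blast
    show ?thesis
    proof (cases "max (hadamard_lower \<phi> x h) 0")
      case (real m)
      show ?thesis unfolding real
      proof (rule ereal_le_epsilon2)
        fix e :: real assume e: "e > 0"
        define c where "c = m + e / (2 * \<tau>)"
        have "m \<ge> 0" using max.cobounded2[of 0 "hadamard_lower \<phi> x h"] real by simp
        then have c: "c > 0" using e tau by (simp add: c_def add_nonneg_pos)
        have "hadamard_lower \<phi> x h \<le> ereal m" using max.cobounded1 real by metis
        also have "ereal m < ereal c" using e tau by (simp add: c_def)
        finally have "hadamard_lower \<phi> x h < ereal c" .
        then have "edist_set h {u. hadamard_lower \<phi> x u \<le> 0} < ereal (\<tau> * c + e / 2)"
          using edist_hadamard_sublevel_less[OF x0 shx tau rho(1) _ c, where e="e / 2"] eb rho(2) e by auto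
        also have "\<tau> * c + e / 2 = \<tau> * m + e" using tau by (simp add: c_def field_simps)
        finally show "edist_set h {u. hadamard_lower \<phi> x u \<le> 0} \<le> ereal \<tau> * ereal m + ereal e"
          by simp
      qed
    qed (use tau in auto)
  qed
  then show ?thesis using d0 dU(1) by (intro exI[of _ "min \<delta>0 dU"]) auto
qed

section \<open>Part (ii): from derivative error bounds to an error bound\<close>

lemma local_error_bound_of_interior:
  assumes "xbar \<in> interior (sublevel0 \<phi>)"
  shows "local_error_bound \<phi> xbar"
proof -
  obtain r where "r > 0" "ball xbar r \<subseteq> sublevel0 \<phi>" using assms mem_interior by blast
  then have "\<forall>x\<in>ball xbar r. edist_set x (sublevel0 \<phi>) \<le> ereal 1 * max (\<phi> x) 0"
    by (intro ballI edist_set_le_error_bound) auto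
  then show ?thesis unfolding local_error_bound_def using \<open>r > 0\<close> zero_less_one by blast
qed

lemma ekeland_point_norm_less_of_epi_tangent:
  fixes \<phi> :: "'a::real_normed_vector \<Rightarrow> ereal"
  assumes ek: "ekeland_point (1/4) (dist z) (sublevel0 \<phi>) u" and u0: "\<phi> u = 0"
    and zero_tangent: "{h. hadamard_lower \<phi> u h = 0} \<subseteq> bouligand_cone (sublevel0 \<phi>) u"
    and db: "\<forall>h. edist_set h {v. hadamard_lower \<phi> u v \<le> 0} \<le> ereal \<tau> * max (hadamard_lower \<phi> u h) 0"
    and tau: "\<tau> > 0" and a: "a > 0"
    and epi_tangent: "(w, \<beta>) \<in> bouligand_cone (epi \<phi>) (u, 0)"
    and close: "norm (z - u - w) + \<bar>a - \<beta>\<bar> < (norm (z - u) + a) / (8 * (1 + \<tau>)) + a"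
  shows "norm (z - u) < (5 + 5 * \<tau>) * a"
proof -
  define r D Q where "r = norm (z - u)" and "D = norm (z - u - w)" and "Q = \<bar>a - \<beta>\<bar>"
  have "edist_set w {v. hadamard_lower \<phi> u v \<le> 0} \<le> ereal \<tau> * max (hadamard_lower \<phi> u w) 0"
    using db by blast
  also have "\<dots> \<le> ereal \<tau> * max (ereal \<beta>) 0"
    using hadamard_lower_le_of_epi_tangent[OF u0 epi_tangent] tau
    by (intro ereal_mult_left_mono max.mono) auto
  also have "\<dots> = ereal (\<tau> * max \<beta> 0)" by (simp add: max_def)
  also have "\<tau> * max \<beta> 0 < \<tau> * (a + Q) + a"
  proof -
    have "max \<beta> 0 \<le> a + Q" using a by (simp add: Q_def)
    then have "\<tau> * max \<beta> 0 \<le> \<tau> * (a + Q)" using tau by (intro mult_left_mono) auto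
    then show ?thesis using a by simp
  qed
  finally obtain w' where w': "hadamard_lower \<phi> u w' \<le> 0" "norm (w - w') < \<tau> * (a + Q) + a"
    by (auto dest!: edist_set_lessD simp: dist_norm)
  have "w' \<in> bouligand_cone (sublevel0 \<phi>) u"
    using zero_tangent tangent_of_hadamard_lower_neg[of \<phi> u w'] u0 w'(1) by (cases "hadamard_lower \<phi> u w' = 0") auto
  then have ek_tangent: "r \<le> norm (z - u - w') + norm w' / 4"
    using ekeland_point_dist_tangent[OF ek] by (simp add: r_def)
  have X: "norm (z - u - w') \<le> D + norm (w - w')"
    using norm_triangle_ineq[of "z - u - w" "w - w'"] by (simp add: D_def)
  have "norm w' \<le> r + norm (z - u - w')"
    using norm_triangle_ineq[of "z - u" "-(z - u - w')"] by (simp add: r_def norm_minus_commute)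
  with ek_tangent have rX: "3 * r \<le> 5 * norm (z - u - w')" by simp
  have "(1 + \<tau>) * (D + Q) < (1 + \<tau>) * ((r + a) / (8 * (1 + \<tau>)) + a)"
    using close tau by (intro mult_strict_left_mono) (simp_all add: r_def D_def Q_def)
  also have "\<dots> = (r + a) / 8 + a + \<tau> * a" using tau by (simp add: field_simps)
  finally have "D + Q + \<tau> * D + \<tau> * Q < (r + a) / 8 + a + \<tau> * a" by (simp add: algebra_simps)
  moreover have "\<tau> * D \<ge> 0" "Q \<ge> 0" using tau by (simp_all add: D_def Q_def)
  moreover have "norm (w - w') < \<tau> * a + \<tau> * Q + a" using w'(2) by (simp add: algebra_simps)
  ultimately have "19 * r < 85 * a + 80 * (\<tau> * a)" using X rX by argo
  moreover have "\<tau> * a > 0" using tau a by simp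
  ultimately have "r < 5 * a + 5 * (\<tau> * a)" using a by argo
  then show ?thesis by (simp add: r_def algebra_simps)
qed

lemma epi_shapiro_at_contact:
  fixes \<phi> :: "'a::real_normed_vector \<Rightarrow> ereal"
  assumes "epi_shapiro_at \<phi> xbar" "\<phi> xbar = 0" "\<epsilon> > 0"
  obtains \<delta> where "\<delta> > 0"
    "\<And>z a u \<eta>. \<phi> z \<le> ereal a \<Longrightarrow> \<phi> u = 0 \<Longrightarrow> norm (z - xbar) + \<bar>a\<bar> < \<delta> \<Longrightarrow> norm (u - xbar) < \<delta> \<Longrightarrow>
      \<eta> > 0 \<Longrightarrow> \<exists>w \<beta>. (w, \<beta>) \<in> bouligand_cone (epi \<phi>) (u, 0) \<and>
        norm (z - u - w) + \<bar>a - \<beta>\<bar> < \<epsilon> * (norm (z - u) + \<bar>a\<bar>) + \<eta>"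
proof -
  let ?N = "\<lambda>(x::'a, \<alpha>::real). norm x + \<bar>\<alpha>\<bar>"
  obtain \<delta> where "\<delta> > 0" and sh: "\<forall>p\<in>epi \<phi>. \<forall>q\<in>epi \<phi>. ?N (p - (xbar, 0)) < \<delta> \<longrightarrow> ?N (q - (xbar, 0)) < \<delta> \<longrightarrow>
      (INF r\<in>bouligand_cone (epi \<phi>) q. ereal (?N (p - q - r))) \<le> ereal (\<epsilon> * ?N (p - q))"
    using assms unfolding epi_shapiro_at_def shapiro_at_N_def by (auto simp: zero_ereal_def)
  moreover have "\<exists>w \<beta>. (w, \<beta>) \<in> bouligand_cone (epi \<phi>) (u, 0) \<and>
        norm (z - u - w) + \<bar>a - \<beta>\<bar> < \<epsilon> * (norm (z - u) + \<bar>a\<bar>) + \<eta>"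
    if "\<phi> z \<le> ereal a" "\<phi> u = 0" "norm (z - xbar) + \<bar>a\<bar> < \<delta>" "norm (u - xbar) < \<delta>" "\<eta> > 0"
    for z a u \<eta>
  proof -
    have "(INF r\<in>bouligand_cone (epi \<phi>) (u, 0). ereal (?N ((z, a) - (u, 0) - r)))
        \<le> ereal (\<epsilon> * (norm (z - u) + \<bar>a\<bar>))"
    proof -
      have "(z, a) \<in> epi \<phi>" "(u, 0) \<in> epi \<phi>" using that(1,2) by (simp_all add: epi_def)
      then show ?thesis using sh that(3,4) by fastforce
    qed
    also have "\<dots> < ereal (\<epsilon> * (norm (z - u) + \<bar>a\<bar>) + \<eta>)" using that(5) by simp
    finally obtain p where "p \<in> bouligand_cone (epi \<phi>) (u, 0)"
        "?N ((z, a) - (u, 0) - p) < \<epsilon> * (norm (z - u) + \<bar>a\<bar>) + \<eta>"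
      by (auto simp: INF_less_iff)
    then show ?thesis by (cases p) (auto simp: algebra_simps)
  qed
  ultimately show ?thesis using that by blast
qed

lemma edist_sublevel0_le_of_contact:
  fixes \<phi> :: "'a::banach \<Rightarrow> ereal"
  assumes closed: "closed (sublevel0 \<phi>)" and xb: "xbar \<in> sublevel0 \<phi>"
    and fr: "frontier (sublevel0 \<phi>) \<subseteq> \<phi> -` {0}"
    and zero_tangent: "\<forall>u\<in>frontier (sublevel0 \<phi>) \<inter> ball xbar \<rho>.
      {h. hadamard_lower \<phi> u h = 0} \<subseteq> bouligand_cone (sublevel0 \<phi>) u"
    and db: "\<forall>u\<in>frontier (sublevel0 \<phi>) \<inter> ball xbar \<rho>. \<forall>h.
      edist_set h {v. hadamard_lower \<phi> u v \<le> 0} \<le> ereal \<tau> * max (hadamard_lower \<phi> u h) 0"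
    and contact: "\<And>u. \<phi> u = 0 \<Longrightarrow> u \<in> ball xbar \<rho> \<Longrightarrow> \<exists>w \<beta>. (w, \<beta>) \<in> bouligand_cone (epi \<phi>) (u, 0) \<and>
      norm (z - u - w) + \<bar>a - \<beta>\<bar> < (norm (z - u) + a) / (8 * (1 + \<tau>)) + a"
    and tau: "\<tau> > 0" and z: "\<phi> z = ereal a" "a > 0" "2 * dist z xbar < \<rho>"
  shows "edist_set z (sublevel0 \<phi>) \<le> ereal ((5 + 5 * \<tau>) * a)"
proof -
  let ?S = "sublevel0 \<phi>"
  obtain u where ek: "ekeland_point (1/4) (dist z) ?S u" and "dist z u \<le> dist z xbar"
    using ekeland_variational_principle[OF closed xb, of "dist z" "1/4"]
      continuous_on_dist[OF continuous_on_const continuous_on_id, of ?S z]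
    by (auto intro: bdd_belowI[of _ 0])
  then have "u \<in> ball xbar \<rho>"
    using dist_triangle[of xbar u z] z(3) by (simp add: dist_commute)
  have "z \<notin> ?S" using z by (simp add: sublevel0_def)
  then have "u \<notin> interior ?S" using ekeland_point_dist_not_interior[OF ek] by simp
  moreover have "u \<in> ?S" using ek by (simp add: ekeland_point_def)
  ultimately have u_fr: "u \<in> frontier ?S" using closure_subset unfolding frontier_def by auto
  then have u0: "\<phi> u = 0" using fr by auto
  obtain w \<beta> where "(w, \<beta>) \<in> bouligand_cone (epi \<phi>) (u, 0)"
    "norm (z - u - w) + \<bar>a - \<beta>\<bar> < (norm (z - u) + a) / (8 * (1 + \<tau>)) + a"
    using contact[OF u0 \<open>u \<in> ball xbar \<rho>\<close>] by blast
  then have "norm (z - u) < (5 + 5 * \<tau>) * a"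
    using ekeland_point_norm_less_of_epi_tangent[OF ek u0] zero_tangent db u_fr \<open>u \<in> ball xbar \<rho>\<close> tau z(2) by blast
  then show ?thesis
    using edist_set_le_dist[OF \<open>u \<in> ?S\<close>, of z] by (simp add: dist_norm order_trans)
qed

lemma edist_sublevel0_le_near_frontier:
  fixes \<phi> :: "'a::banach \<Rightarrow> ereal"
  assumes closed: "closed (sublevel0 \<phi>)" and xb: "xbar \<in> sublevel0 \<phi>"
    and fr: "frontier (sublevel0 \<phi>) \<subseteq> \<phi> -` {0}"
    and zero_tangent: "\<forall>u\<in>frontier (sublevel0 \<phi>) \<inter> ball xbar \<rho>.
      {h. hadamard_lower \<phi> u h = 0} \<subseteq> bouligand_cone (sublevel0 \<phi>) u"
    and db: "\<forall>u\<in>frontier (sublevel0 \<phi>) \<inter> ball xbar \<rho>. \<forall>h.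
      edist_set h {v. hadamard_lower \<phi> u v \<le> 0} \<le> ereal \<tau> * max (hadamard_lower \<phi> u h) 0"
    and contact: "\<And>z a u \<eta>. \<phi> z \<le> ereal a \<Longrightarrow> \<phi> u = 0 \<Longrightarrow>
      norm (z - xbar) + \<bar>a\<bar> < \<delta> \<Longrightarrow> norm (u - xbar) < \<delta> \<Longrightarrow> \<eta> > 0 \<Longrightarrow>
      \<exists>w \<beta>. (w, \<beta>) \<in> bouligand_cone (epi \<phi>) (u, 0) \<and>
        norm (z - u - w) + \<bar>a - \<beta>\<bar> < 1 / (8 * (1 + \<tau>)) * (norm (z - u) + \<bar>a\<bar>) + \<eta>"
    and tau: "\<tau> > 0" and \<rho>: "\<rho> \<le> \<delta>" and z: "2 * dist z xbar < \<rho>"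
  shows "edist_set z (sublevel0 \<phi>) \<le> ereal (5 + 5 * \<tau>) * max (\<phi> z) 0"
proof (cases "\<phi> z")
  case (real a)
  consider "a \<le> 0" | "0 < a" "a \<ge> \<delta> / 2" | "0 < a" "a < \<delta> / 2" by linarith
  then show ?thesis
  proof cases
    case 1
    then show ?thesis using real tau by (intro edist_set_le_error_bound) (auto simp: sublevel0_def)
  next
    case 2
    have "dist z xbar < \<delta> / 2" "0 \<le> \<tau> * a" using z \<rho> tau 2 by auto
    then have "dist z xbar \<le> 5 * a + 5 * (\<tau> * a)" using 2 by argo
    then show ?thesis
      using edist_set_le_dist[OF xb, of z] real 2 z
      by (simp add: max_def algebra_simps order_trans split: if_splits)
  next
    case 3
    have "edist_set z (sublevel0 \<phi>) \<le> ereal ((5 + 5 * \<tau>) * a)"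
    proof (rule edist_sublevel0_le_of_contact[OF closed xb fr zero_tangent db _ tau real 3(1) z])
      show "\<exists>w \<beta>. (w, \<beta>) \<in> bouligand_cone (epi \<phi>) (u, 0) \<and>
          norm (z - u - w) + \<bar>a - \<beta>\<bar> < (norm (z - u) + a) / (8 * (1 + \<tau>)) + a"
        if "\<phi> u = 0" "u \<in> ball xbar \<rho>" for u
        using contact[of z a u a] that real 3 z \<rho> by (auto simp: dist_norm norm_minus_commute)
    qed
    then show ?thesis using 3 real by (simp add: max_def)
  qed
next
  case PInf
  then show ?thesis using tau by simp
next
  case MInf
  then show ?thesis using tau by (intro edist_set_le_error_bound) (simp_all add: sublevel0_def)
qed

lemma local_error_bound_of_derivative_error_bound:
  fixes \<phi> :: "'a::banach \<Rightarrow> ereal"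
  assumes lsc: "lsc_fun \<phi>" and xb: "xbar \<in> sublevel0 \<phi>"
    and fr: "frontier (sublevel0 \<phi>) \<subseteq> \<phi> -` {0}"
    and esh: "epi_shapiro_at \<phi> xbar"
    and U: "open U" "xbar \<in> U"
      "\<forall>x\<in>U \<inter> frontier (sublevel0 \<phi>). {h. hadamard_lower \<phi> x h = 0} \<subseteq> bouligand_cone (sublevel0 \<phi>) x"
    and tau: "\<tau> > 0" and d1: "\<delta>1 > 0"
    and db: "\<forall>x\<in>frontier (sublevel0 \<phi>) \<inter> ball xbar \<delta>1. \<forall>h.
      edist_set h {u. hadamard_lower \<phi> x u \<le> 0} \<le> ereal \<tau> * max (hadamard_lower \<phi> x h) 0"
  shows "local_error_bound \<phi> xbar"
proof (cases "xbar \<in> interior (sublevel0 \<phi>)")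
  case True
  then show ?thesis by (rule local_error_bound_of_interior)
next
  case False
  then have "\<phi> xbar = 0" using xb fr closure_subset unfolding frontier_def by auto
  then obtain \<delta>e where "\<delta>e > 0" and contact: "\<And>z a u \<eta>. \<phi> z \<le> ereal a \<Longrightarrow> \<phi> u = 0 \<Longrightarrow>
      norm (z - xbar) + \<bar>a\<bar> < \<delta>e \<Longrightarrow> norm (u - xbar) < \<delta>e \<Longrightarrow> \<eta> > 0 \<Longrightarrow>
      \<exists>w \<beta>. (w, \<beta>) \<in> bouligand_cone (epi \<phi>) (u, 0) \<and>
        norm (z - u - w) + \<bar>a - \<beta>\<bar> < 1 / (8 * (1 + \<tau>)) * (norm (z - u) + \<bar>a\<bar>) + \<eta>"
    using epi_shapiro_at_contact[OF esh, of "1 / (8 * (1 + \<tau>))"] tau by auto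
  obtain dU where "dU > 0" "ball xbar dU \<subseteq> U" using U(1,2) open_contains_ball by blast
  define \<rho> where "\<rho> = min \<delta>1 (min dU \<delta>e)"
  have "ball xbar \<rho> \<subseteq> U" "ball xbar \<rho> \<subseteq> ball xbar \<delta>1"
    using \<open>ball xbar dU \<subseteq> U\<close> by (auto simp: \<rho>_def)
  then have "\<forall>u\<in>frontier (sublevel0 \<phi>) \<inter> ball xbar \<rho>.
      {h. hadamard_lower \<phi> u h = 0} \<subseteq> bouligand_cone (sublevel0 \<phi>) u"
    "\<forall>u\<in>frontier (sublevel0 \<phi>) \<inter> ball xbar \<rho>. \<forall>h.
      edist_set h {v. hadamard_lower \<phi> u v \<le> 0} \<le> ereal \<tau> * max (hadamard_lower \<phi> u h) 0"
    using U(3) db by blast+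
  then have "edist_set z (sublevel0 \<phi>) \<le> ereal (5 + 5 * \<tau>) * max (\<phi> z) 0"
    if "z \<in> ball xbar (\<rho> / 2)" for z
    by (rule edist_sublevel0_le_near_frontier[OF closed_sublevel0[OF lsc] xb fr _ _ contact tau])
      (use that in \<open>auto simp: \<rho>_def dist_commute\<close>)
  moreover have "5 + 5 * \<tau> > 0" "\<rho> / 2 > 0" using d1 \<open>dU > 0\<close> \<open>\<delta>e > 0\<close> tau by (simp_all add: \<rho>_def)
  ultimately show ?thesis unfolding local_error_bound_def by blast
qed

lemma local_error_bound_iff_derivative_error_bound:
  fixes \<phi> :: "'a::banach \<Rightarrow> ereal"
  assumes lsc: "lsc_fun \<phi>" and xb: "xbar \<in> sublevel0 \<phi>"
    and fr: "frontier (sublevel0 \<phi>) \<subseteq> \<phi> -` {0}"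
    and esh: "epi_shapiro_at \<phi> xbar" and sh: "shapiro_around (sublevel0 \<phi>) xbar"
    and U: "\<exists>U. open U \<and> xbar \<in> U \<and> (\<forall>x\<in>U \<inter> frontier (sublevel0 \<phi>).
      {h. hadamard_lower \<phi> x h = 0} \<subseteq> bouligand_cone (sublevel0 \<phi>) x)"
  shows "local_error_bound \<phi> xbar \<longleftrightarrow> (\<exists>\<tau>>0. \<exists>\<delta>>0. \<forall>x\<in>frontier (sublevel0 \<phi>) \<inter> ball xbar \<delta>. \<forall>h.
      edist_set h {u. hadamard_lower \<phi> x u \<le> 0} \<le> ereal \<tau> * max (hadamard_lower \<phi> x h) 0)"
proof
  assume "local_error_bound \<phi> xbar"
  then obtain \<tau> \<delta> where "\<tau> > 0" "\<delta> > 0"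
    "\<forall>x\<in>ball xbar \<delta>. edist_set x (sublevel0 \<phi>) \<le> ereal \<tau> * max (\<phi> x) 0"
    unfolding local_error_bound_def by blast
  then show "\<exists>\<tau>>0. \<exists>\<delta>>0. \<forall>x\<in>frontier (sublevel0 \<phi>) \<inter> ball xbar \<delta>. \<forall>h.
      edist_set h {u. hadamard_lower \<phi> x u \<le> 0} \<le> ereal \<tau> * max (hadamard_lower \<phi> x h) 0"
    using derivative_error_bound_of_error_bound[OF fr sh] by blast
next
  assume "\<exists>\<tau>>0. \<exists>\<delta>>0. \<forall>x\<in>frontier (sublevel0 \<phi>) \<inter> ball xbar \<delta>. \<forall>h.
    edist_set h {u. hadamard_lower \<phi> x u \<le> 0} \<le> ereal \<tau> * max (hadamard_lower \<phi> x h) 0"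
  then show "local_error_bound \<phi> xbar"
    using U local_error_bound_of_derivative_error_bound[OF lsc xb fr esh] by blast
qed

theorem corollary4p1:
  fixes \<phi> :: "'a::banach \<Rightarrow> ereal" and xbar :: 'a
  assumes "proper_fun \<phi>" and "lsc_fun \<phi>"
    and "xbar \<in> sublevel0 \<phi>"
    and "frontier (sublevel0 \<phi>) \<subseteq> \<phi> -` {0}"
    and "epi_shapiro_at \<phi> xbar"
    and "shapiro_around (sublevel0 \<phi>) xbar"
  shows
    "(\<forall>\<tau> \<delta>\<^sub>0. \<tau> > 0 \<longrightarrow> \<delta>\<^sub>0 > 0 \<longrightarrow>
        (\<forall>x\<in>ball xbar \<delta>\<^sub>0. edist_set x (sublevel0 \<phi>) \<le> ereal \<tau> * max (\<phi> x) 0) \<longrightarrow>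
        (\<exists>\<delta>>0. \<forall>x\<in>frontier (sublevel0 \<phi>) \<inter> ball xbar \<delta>. \<forall>h.
            edist_set h {u. hadamard_lower \<phi> x u \<le> 0}
              \<le> ereal \<tau> * max (hadamard_lower \<phi> x h) 0))
   \<and>
    ((\<exists>U. open U \<and> xbar \<in> U \<and> (\<forall>x\<in>U \<inter> frontier (sublevel0 \<phi>).
         {h. hadamard_lower \<phi> x h = 0} \<subseteq> bouligand_cone (sublevel0 \<phi>) x)) \<longrightarrow>
     (local_error_bound \<phi> xbar \<longleftrightarrow>
       (\<exists>\<tau>>0. \<exists>\<delta>>0. \<forall>x\<in>frontier (sublevel0 \<phi>) \<inter> ball xbar \<delta>. \<forall>h.
            edist_set h {u. hadamard_lower \<phi> x u \<le> 0}
              \<le> ereal \<tau> * max (hadamard_lower \<phi> x h) 0)))"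
  using derivative_error_bound_of_error_bound[OF assms(4,6)]
    local_error_bound_iff_derivative_error_bound[OF assms(2-6)]
  by blast

end
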